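(* Let $n\ge 2$ and let $\mathcal{C}\subseteq\{0,1\}^{n\times n}$ be a code. Then $\mathcal{C}$ is a $(1,1)$-criss-cross deletion correcting code if and only if it is a $(1,1)$-criss-cross insertion correcting code.
   Context: For a binary array $\mathbf{X}$, $\mathbb{D}_{t_r,t_c}(\mathbf{X})$ denotes the set of all arrays obtained from $\mathbf{X}$ by deleting any $t_r$ rows and any $t_c$ columns, and $\mathbb{I}_{t_r,t_c}(\mathbf{X})$ the set of all binary arrays obtained from $\mathbf{X}$ by inserting $t_r$ rows and $t_c$ columns (with arbitrary binary content, at arbitrary positions). A code $\mathcal{C}\subseteq\{0,1\}^{n\times n}$ is a $(t_r,t_c)$-criss-cross deletion correcting code if it can correct any deletion of $t_r$ rows and $t_c$ columns, i.e. $\mathbb{D}_{t_r,t_c}(\mathbf{X})\cap\mathbb{D}_{t_r,t_c}(\mathbf{Y})=\emptyset$ for all distinct $\mathbf{X},\mathbf{Y}\in\mathcal{C}$; a $(t_r,t_c)$-criss-cross insertion correcting code is defined analogously with $\mathbb{I}_{t_r,t_c}$. *)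

theory Defs
  imports Main
begin

text \<open>Binary arrays are represented as lists of rows; each row is a list of booleans.
  An m x k array is a list of m rows each of length k.\<close>

definition is_array :: "nat \<Rightarrow> nat \<Rightarrow> bool list list \<Rightarrow> bool" where
  "is_array m k X \<longleftrightarrow> length X = m \<and> (\<forall>r \<in> set X. length r = k)"

definition keep :: "nat set \<Rightarrow> 'a list \<Rightarrow> 'a list" where
  "keep S xs = nths xs S"

definition del_ball :: "nat \<Rightarrow> nat \<Rightarrow> bool list list \<Rightarrow> bool list list set" where
  "del_ball tr tc X =
     {map (keep (- C)) (keep (- R) X) | R C.
        R \<subseteq> {..<length X} \<and> card R = tr \<and>
        C \<subseteq> {..<length (hd X)} \<and> card C = tc}"

definition ins_ball :: "nat \<Rightarrow> nat \<Rightarrow> nat \<Rightarrow> nat \<Rightarrow> bool list list \<Rightarrow> bool list list set" where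
  "ins_ball m k tr tc X =
     {Y. is_array (m + tr) (k + tc) Y \<and> X \<in> del_ball tr tc Y}"

definition criss_cross_del_code :: "nat \<Rightarrow> nat \<Rightarrow> nat \<Rightarrow> bool list list set \<Rightarrow> bool" where
  "criss_cross_del_code n tr tc Cd \<longleftrightarrow>
     (\<forall>X\<in>Cd. \<forall>Y\<in>Cd. X \<noteq> Y \<longrightarrow> del_ball tr tc X \<inter> del_ball tr tc Y = {})"

definition criss_cross_ins_code :: "nat \<Rightarrow> nat \<Rightarrow> nat \<Rightarrow> bool list list set \<Rightarrow> bool" where
  "criss_cross_ins_code n tr tc Cd \<longleftrightarrow>
     (\<forall>X\<in>Cd. \<forall>Y\<in>Cd. X \<noteq> Y \<longrightarrow> ins_ball n n tr tc X \<inter> ins_ball n n tr tc Y = {})"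

end

theory Submission
  imports Defs
begin

text \<open>Deleting row i and column j of an array reindexes it along the injections
  skip i and skip j, which miss exactly i and j. Two such deletions in a row remove two
  positions, and these can be removed in either order (skip_skip). If X and Y have a
  common (1,1)-deletion, removing rows i1, i2 and columns j1, j2, pick p1, p2 with
  skip p2 \<circ> skip i1 = skip p1 \<circ> skip i2 (and q1, q2 likewise) and let W be X with a new
  row p2 and column q2 taken from Y; on the entries where both X and Y are placed in W
  they agree because of the common deletion, so W is a common insertion. Conversely, if
  X and Y arise from W by deleting row/column (p1, q1) resp. (p2, q2), the same identity
  yields i1, i2, j1, j2 such that both deletions from X and Y remove the same two rows
  and columns of W.\<close>

definition skip :: "nat \<Rightarrow> nat \<Rightarrow> nat" where
  "skip i a = (if a < i then a else Suc a)"

definition unskip :: "nat \<Rightarrow> nat \<Rightarrow> nat" where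
  "unskip i u = (if u < i then u else u - 1)"

lemma skip_neq [simp]: "skip i a \<noteq> i"
  by (simp add: skip_def)

lemma unskip_skip [simp]: "unskip i (skip i a) = a"
  by (auto simp: skip_def unskip_def)

lemma skip_unskip: "u \<noteq> i \<Longrightarrow> skip i (unskip i u) = u"
  by (auto simp: skip_def unskip_def)

lemma skip_less: "i < n \<Longrightarrow> a < n - 1 \<Longrightarrow> skip i a < n"
  by (auto simp: skip_def)

lemma unskip_less: "i < n \<Longrightarrow> u < n \<Longrightarrow> u \<noteq> i \<Longrightarrow> unskip i u < n - 1"
  by (auto simp: unskip_def)

text \<open>The cosimplicial identity for face maps.\<close>
lemma skip_skip: "i \<le> j \<Longrightarrow> skip (Suc j) (skip i a) = skip i (skip j a)"
  by (simp add: skip_def)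

lemma complete_skip_square_up:
  assumes "i1 < n" "i2 < n"
  obtains p1 p2 where "p1 \<le> n" "p2 \<le> n" "skip p1 i2 = p2"
    "\<And>a. skip p2 (skip i1 a) = skip p1 (skip i2 a)"
proof (cases "i1 \<le> i2")
  case True
  then show ?thesis using assms skip_skip
    by (intro that[of i1 "Suc i2"]) (auto simp: skip_def)
next
  case False
  then show ?thesis using assms skip_skip[of i2 i1]
    by (intro that[of "Suc i1" i2]) (auto simp: skip_def)
qed

lemma complete_skip_square_down:
  assumes "p1 \<le> n" "p2 \<le> n" "1 \<le> n"
  obtains i1 i2 where "i1 < n" "i2 < n" "\<And>a. skip p1 (skip i1 a) = skip p2 (skip i2 a)"
proof -
  consider "p1 < p2" | "p1 = p2" | "p2 < p1" by arith
  then show ?thesis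
  proof cases
    case 1
    then show ?thesis using assms skip_skip[of p1 "p2 - 1"]
      by (intro that[of "p2 - 1" p1]) auto
  next
    case 2
    then show ?thesis using assms by (intro that[of 0 0]) auto
  next
    case 3
    then show ?thesis using assms skip_skip[of p2 "p1 - 1"]
      by (intro that[of p2 "p1 - 1"]) auto
  qed
qed

lemma unskip_skip_square:
  assumes square: "\<And>a. skip p2 (skip i1 a) = skip p1 (skip i2 a)"
    and "skip p1 i2 = p2" and "skip p1 u \<noteq> p2"
  shows "u \<noteq> i2" and "unskip p2 (skip p1 u) = skip i1 (unskip i2 u)"
proof -
  show "u \<noteq> i2" using assms(2,3) by blast
  then have "skip p1 u = skip p2 (skip i1 (unskip i2 u))"
    by (simp add: square skip_unskip)
  then show "unskip p2 (skip p1 u) = skip i1 (unskip i2 u)" by simp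
qed

definition tabulate :: "nat \<Rightarrow> nat \<Rightarrow> (nat \<Rightarrow> nat \<Rightarrow> 'a) \<Rightarrow> 'a list list" where
  "tabulate m k f = map (\<lambda>a. map (f a) [0..<k]) [0..<m]"

lemma nth_tabulate [simp]: "a < m \<Longrightarrow> b < k \<Longrightarrow> tabulate m k f ! a ! b = f a b"
  by (simp add: tabulate_def)

lemma is_array_tabulate: "is_array m k (tabulate m k f)"
  by (auto simp: tabulate_def is_array_def)

lemma tabulate_cong:
  "(\<And>a b. a < m \<Longrightarrow> b < k \<Longrightarrow> f a b = g a b) \<Longrightarrow> tabulate m k f = tabulate m k g"
  by (auto simp: tabulate_def)

lemma tabulate_nth: "is_array m k X \<Longrightarrow> tabulate m k (\<lambda>a b. X ! a ! b) = X"
  unfolding tabulate_def is_array_def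
  by (rule nth_equalityI) (auto intro!: nth_equalityI)

definition del_row_col :: "nat \<Rightarrow> nat \<Rightarrow> nat \<Rightarrow> nat \<Rightarrow> 'a list list \<Rightarrow> 'a list list" where
  "del_row_col m k i j X = tabulate (m - 1) (k - 1) (\<lambda>a b. X ! skip i a ! skip j b)"

lemma nths_Compl_singleton:
  assumes "i < length xs"
  shows "nths xs (- {i}) = map (\<lambda>a. xs ! skip i a) [0..<length xs - 1]"
proof -
  have "nths xs (- {i}) = nths (take i xs @ xs ! i # drop (Suc i) xs) (- {i})"
    using assms by (simp add: id_take_nth_drop[symmetric])
  also have "\<dots> = take i xs @ drop (Suc i) xs"
    using assms by (simp add: nths_append nths_Cons nths_all)
  also have "\<dots> = map (\<lambda>a. xs ! skip i a) [0..<length xs - 1]"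
    using assms by (intro nth_equalityI) (auto simp: nth_append skip_def min_def)
  finally show ?thesis .
qed

lemma del_ball_1_1_eq:
  assumes X: "is_array m k X" and "1 \<le> m"
  shows "del_ball 1 1 X = {del_row_col m k i j X | i j. i < m \<and> j < k}"
proof -
  have rows: "length X = m" and cols: "\<And>r. r \<in> set X \<Longrightarrow> length r = k"
    using X by (auto simp: is_array_def)
  have cols_hd: "length (hd X) = k" using rows cols \<open>1 \<le> m\<close> by (cases X) auto
  have delete: "map (keep (- {j})) (keep (- {i}) X) = del_row_col m k i j X"
    if "i < m" "j < k" for i j
  proof -
    have "X ! skip i a \<in> set X" if "a < m - 1" for a
      using that \<open>i < m\<close> rows by (simp add: skip_less)
    then show ?thesis
      using that rows cols
      by (simp add: keep_def nths_Compl_singleton del_row_col_def tabulate_def)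
  qed
  show ?thesis
  proof (intro equalityI subsetI)
    fix Z assume "Z \<in> del_ball 1 1 X"
    then obtain R C where "R \<subseteq> {..<m}" "card R = 1" "C \<subseteq> {..<k}" "card C = 1"
      and Z: "Z = map (keep (- C)) (keep (- R) X)"
      unfolding del_ball_def rows cols_hd by blast
    then obtain i j where "i < m" "j < k" "R = {i}" "C = {j}"
      by (metis One_nat_def card_1_singleton_iff insert_subset lessThan_iff)
    with Z show "Z \<in> {del_row_col m k i j X | i j. i < m \<and> j < k}"
      using delete by blast
  next
    fix Z assume "Z \<in> {del_row_col m k i j X | i j. i < m \<and> j < k}"
    then obtain i j where ij: "i < m" "j < k" and "Z = del_row_col m k i j X"
      by blast
    with delete have "Z = map (keep (- {j})) (keep (- {i}) X)"
      by simp
    then show "Z \<in> del_ball 1 1 X"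
      using ij unfolding del_ball_def rows cols_hd
      by (intro CollectI exI[of _ "{i}"] exI[of _ "{j}"]) simp
  qed
qed

lemma ins_ball_1_1_iff:
  "W \<in> ins_ball m k 1 1 X \<longleftrightarrow>
     is_array (m + 1) (k + 1) W \<and>
     (\<exists>p q. p \<le> m \<and> q \<le> k \<and> X = del_row_col (m + 1) (k + 1) p q W)"
  using del_ball_1_1_eq[of "m + 1" "k + 1" W]
  by (auto simp: ins_ball_def less_Suc_eq_le)

lemma del_row_col_del_row_col:
  assumes "i < m" "j < k"
  shows "del_row_col m k i j (del_row_col (m + 1) (k + 1) p q W) =
    tabulate (m - 1) (k - 1) (\<lambda>a b. W ! skip p (skip i a) ! skip q (skip j b))"
  unfolding del_row_col_def[of m k]
  by (rule tabulate_cong) (simp add: assms del_row_col_def skip_less)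

lemma common_deletion_imp_common_insertion:
  assumes X: "is_array m k X" and Y: "is_array m k Y"
    and ij: "i1 < m" "i2 < m" "j1 < k" "j2 < k"
    and common: "del_row_col m k i1 j1 X = del_row_col m k i2 j2 Y"
  shows "ins_ball m k 1 1 X \<inter> ins_ball m k 1 1 Y \<noteq> {}"
proof -
  obtain p1 p2 where p: "p1 \<le> m" "p2 \<le> m" "skip p1 i2 = p2"
    and square_p: "\<And>a. skip p2 (skip i1 a) = skip p1 (skip i2 a)"
    using complete_skip_square_up[OF ij(1,2)] by blast
  obtain q1 q2 where q: "q1 \<le> k" "q2 \<le> k" "skip q1 j2 = q2"
    and square_q: "\<And>b. skip q2 (skip j1 b) = skip q1 (skip j2 b)"
    using complete_skip_square_up[OF ij(3,4)] by blast
  have common_entry: "X ! skip i1 a ! skip j1 b = Y ! skip i2 a ! skip j2 b"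
    if "a < m - 1" "b < k - 1" for a b
    using arg_cong[OF common, of "\<lambda>Z. Z ! a ! b"] that by (simp add: del_row_col_def)
  define W where "W = tabulate (m + 1) (k + 1) (\<lambda>u v.
    if u = p2 \<or> v = q2 then Y ! unskip p1 u ! unskip q1 v else X ! unskip p2 u ! unskip q2 v)"
  have W: "is_array (m + 1) (k + 1) W"
    unfolding W_def by (rule is_array_tabulate)
  have "X = tabulate m k (\<lambda>a b. W ! skip p2 a ! skip q2 b)"
  proof (subst tabulate_nth[OF X, symmetric], rule tabulate_cong)
    fix a b assume "a < m" "b < k"
    then show "X ! a ! b = W ! skip p2 a ! skip q2 b"
      using p q by (simp add: W_def skip_less)
  qed
  then have "W \<in> ins_ball m k 1 1 X"
    using W p q unfolding ins_ball_1_1_iff del_row_col_def by auto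
  have "Y = tabulate m k (\<lambda>a b. W ! skip p1 a ! skip q1 b)"
  proof (subst tabulate_nth[OF Y, symmetric], rule tabulate_cong)
    fix a b assume ab: "a < m" "b < k"
    show "Y ! a ! b = W ! skip p1 a ! skip q1 b"
    proof (cases "skip p1 a = p2 \<or> skip q1 b = q2")
      case True
      then show ?thesis using ab p q by (auto simp: W_def skip_less)
    next
      case False
      then have "a \<noteq> i2" "b \<noteq> j2"
        and rows: "unskip p2 (skip p1 a) = skip i1 (unskip i2 a)"
        and cols: "unskip q2 (skip q1 b) = skip j1 (unskip j2 b)"
        using unskip_skip_square[of p2 i1 p1 i2, OF square_p p(3)]
          unskip_skip_square[of q2 j1 q1 j2, OF square_q q(3)] by auto
      have "W ! skip p1 a ! skip q1 b = X ! skip i1 (unskip i2 a) ! skip j1 (unskip j2 b)"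
        using False ab p q by (simp add: W_def skip_less rows cols)
      also have "\<dots> = Y ! skip i2 (unskip i2 a) ! skip j2 (unskip j2 b)"
        using ab ij \<open>a \<noteq> i2\<close> \<open>b \<noteq> j2\<close> by (intro common_entry unskip_less)
      also have "\<dots> = Y ! a ! b"
        using \<open>a \<noteq> i2\<close> \<open>b \<noteq> j2\<close> by (simp add: skip_unskip)
      finally show ?thesis by simp
    qed
  qed
  then have "W \<in> ins_ball m k 1 1 Y"
    using W p q unfolding ins_ball_1_1_iff del_row_col_def by auto
  with \<open>W \<in> ins_ball m k 1 1 X\<close> show ?thesis by blast
qed

lemma common_insertion_imp_common_deletion:
  assumes "1 \<le> m" "1 \<le> k"
    and WX: "W \<in> ins_ball m k 1 1 X" and WY: "W \<in> ins_ball m k 1 1 Y"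
  shows "del_ball 1 1 X \<inter> del_ball 1 1 Y \<noteq> {}"
proof -
  obtain p1 q1 where "p1 \<le> m" "q1 \<le> k" and X: "X = del_row_col (m + 1) (k + 1) p1 q1 W"
    using WX unfolding ins_ball_1_1_iff by blast
  obtain p2 q2 where "p2 \<le> m" "q2 \<le> k" and Y: "Y = del_row_col (m + 1) (k + 1) p2 q2 W"
    using WY unfolding ins_ball_1_1_iff by blast
  obtain i1 i2 where i: "i1 < m" "i2 < m" "\<And>a. skip p1 (skip i1 a) = skip p2 (skip i2 a)"
    using complete_skip_square_down[OF \<open>p1 \<le> m\<close> \<open>p2 \<le> m\<close> \<open>1 \<le> m\<close>] by blast
  obtain j1 j2 where j: "j1 < k" "j2 < k" "\<And>b. skip q1 (skip j1 b) = skip q2 (skip j2 b)"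
    using complete_skip_square_down[OF \<open>q1 \<le> k\<close> \<open>q2 \<le> k\<close> \<open>1 \<le> k\<close>] by blast
  have "is_array m k X" "is_array m k Y"
    unfolding X Y del_row_col_def using is_array_tabulate by auto
  moreover have "del_row_col m k i1 j1 X = del_row_col m k i2 j2 Y"
    unfolding X Y del_row_col_del_row_col[OF i(1) j(1)] del_row_col_del_row_col[OF i(2) j(2)]
    using i(3) j(3) by simp
  ultimately show ?thesis
    using del_ball_1_1_eq \<open>1 \<le> m\<close> i(1,2) j(1,2) by blast
qed

lemma del_balls_disjoint_iff_ins_balls_disjoint:
  assumes "1 \<le> m" "1 \<le> k" and X: "is_array m k X" and Y: "is_array m k Y"
  shows "del_ball 1 1 X \<inter> del_ball 1 1 Y = {} \<longleftrightarrow>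
    ins_ball m k 1 1 X \<inter> ins_ball m k 1 1 Y = {}"
proof
  assume disjoint: "ins_ball m k 1 1 X \<inter> ins_ball m k 1 1 Y = {}"
  show "del_ball 1 1 X \<inter> del_ball 1 1 Y = {}"
  proof (rule equals0I)
    fix Z assume "Z \<in> del_ball 1 1 X \<inter> del_ball 1 1 Y"
    then obtain i1 j1 i2 j2 where "i1 < m" "j1 < k" "i2 < m" "j2 < k"
      and "Z = del_row_col m k i1 j1 X" "Z = del_row_col m k i2 j2 Y"
      unfolding del_ball_1_1_eq[OF X \<open>1 \<le> m\<close>] del_ball_1_1_eq[OF Y \<open>1 \<le> m\<close>] by blast
    then show False
      using common_deletion_imp_common_insertion[OF X Y] disjoint by metis
  qed
next
  assume "del_ball 1 1 X \<inter> del_ball 1 1 Y = {}"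
  then show "ins_ball m k 1 1 X \<inter> ins_ball m k 1 1 Y = {}"
    using common_insertion_imp_common_deletion[OF assms(1,2)] by blast
qed

theorem theorem1:
  fixes n :: nat and Cd :: "bool list list set"
  assumes "n \<ge> 2"
    and "\<forall>X\<in>Cd. is_array n n X"
  shows "criss_cross_del_code n 1 1 Cd \<longleftrightarrow> criss_cross_ins_code n 1 1 Cd"
proof -
  have "1 \<le> n" using \<open>n \<ge> 2\<close> by simp
  then show ?thesis
    unfolding criss_cross_del_code_def criss_cross_ins_code_def
    using del_balls_disjoint_iff_ins_balls_disjoint assms(2) by metis
qed

end
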